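(* If a spanned map $(M,S)$ is a covered map, then the dual spanned map $(M^*,\bar S)$ is also a covered map, and $$g(M)=g(M_{|S})+g(M^*_{|\bar S}).$$
   Context: Permutations compose right to left. A map is $M=(H,\sigma,\alpha)$ with $H$ finite, $\alpha$ a fixed-point-free involution, $\sigma$ a permutation, $\langle\sigma,\alpha\rangle$ transitive, and a root $r\in H$. Vertices, edges, faces are the cycles of $\sigma,\alpha,\phi=\sigma\alpha$; the genus $g$ satisfies $v-e+f=2-2g$. For a permutation $\pi$ and $S\subseteq H$, $\pi_{|S}$ is obtained from the cycles of $\pi$ by erasing elements not in $S$. A spanned map is $(M,S)$ with $S$ stable by $\alpha$, and $M_{|S}=(S,\sigma_{|S},\alpha_{|S})$. The dual of $M$ is $M^*=(H,\phi,\alpha)$ with the same root, and the dual of $(M,S)$ is $(M^*,\bar S)$ with $\bar S=H\setminus S$, so $M^*_{|\bar S}=(\bar S,\phi_{|\bar S},\alpha_{|\bar S})$. A covered map is a spanned map such that $M_{|S}$ is a connecting unicellular map: $\sigma_{|S},\alpha_{|S}$ transitive on $S$, $S$ meets every cycle of $\sigma$ (except $S=\emptyset$ is allowed when $\sigma$ has one cycle; the empty map counts as a unicellular map of genus $0$), and $\sigma_{|S}\alpha_{|S}$ is cyclic. *)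

theory Defs
  imports Main "HOL-Library.FuncSet"
begin

definition perm_on :: "('a \<Rightarrow> 'a) \<Rightarrow> 'a set \<Rightarrow> bool" where
  "perm_on \<pi> H \<longleftrightarrow> bij_betw \<pi> H H \<and> (\<forall>x. x \<notin> H \<longrightarrow> \<pi> x = x)"

text \<open>Restriction \<open>\<pi>_{|S}\<close>: erase from the cycles of \<pi> the elements not in S,
  i.e. send x in S to the first element of S after x on its \<pi>-cycle.\<close>
definition restr :: "('a \<Rightarrow> 'a) \<Rightarrow> 'a set \<Rightarrow> 'a \<Rightarrow> 'a" where
  "restr \<pi> S x = (if x \<in> S then (\<pi> ^^ (LEAST n. 0 < n \<and> (\<pi> ^^ n) x \<in> S)) x else x)"

definition cyc :: "('a \<Rightarrow> 'a) \<Rightarrow> 'a \<Rightarrow> 'a set" where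
  "cyc \<pi> x = {(\<pi> ^^ n) x | n. True}"

definition ncycles :: "('a \<Rightarrow> 'a) \<Rightarrow> 'a set \<Rightarrow> nat" where
  "ncycles \<pi> A = card (cyc \<pi> ` A)"

definition transitive_on :: "'a set \<Rightarrow> ('a \<Rightarrow> 'a) \<Rightarrow> ('a \<Rightarrow> 'a) \<Rightarrow> bool" where
  "transitive_on H \<sigma> \<alpha> \<longleftrightarrow>
     (\<forall>x\<in>H. \<forall>y\<in>H. (x, y) \<in> ({(z, \<sigma> z) | z. z \<in> H} \<union> {(z, \<alpha> z) | z. z \<in> H})\<^sup>*)"

definition is_map :: "'a set \<Rightarrow> ('a \<Rightarrow> 'a) \<Rightarrow> ('a \<Rightarrow> 'a) \<Rightarrow> bool" where
  "is_map H \<sigma> \<alpha> \<longleftrightarrow> finite H \<and> perm_on \<sigma> H \<and> perm_on \<alpha> H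
     \<and> (\<forall>x\<in>H. \<alpha> (\<alpha> x) = x \<and> \<alpha> x \<noteq> x) \<and> transitive_on H \<sigma> \<alpha>"

text \<open>Genus: v - e + f = 2 - 2g; the empty map has genus 0.\<close>
definition genus :: "'a set \<Rightarrow> ('a \<Rightarrow> 'a) \<Rightarrow> ('a \<Rightarrow> 'a) \<Rightarrow> int" where
  "genus H \<sigma> \<alpha> = (if H = {} then 0 else
     (2 - int (ncycles \<sigma> H) + int (ncycles \<alpha> H) - int (ncycles (\<sigma> \<circ> \<alpha>) H)) div 2)"

definition spanned :: "'a set \<Rightarrow> ('a \<Rightarrow> 'a) \<Rightarrow> ('a \<Rightarrow> 'a) \<Rightarrow> 'a set \<Rightarrow> bool" where
  "spanned H \<sigma> \<alpha> S \<longleftrightarrow> is_map H \<sigma> \<alpha> \<and> S \<subseteq> H \<and> \<alpha> ` S \<subseteq> S"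

text \<open>Covered map: M_{|S} is a connecting unicellular map.\<close>
definition covered :: "'a set \<Rightarrow> ('a \<Rightarrow> 'a) \<Rightarrow> ('a \<Rightarrow> 'a) \<Rightarrow> 'a set \<Rightarrow> bool" where
  "covered H \<sigma> \<alpha> S \<longleftrightarrow> spanned H \<sigma> \<alpha> S \<and>
     (if S = {} then ncycles \<sigma> H = 1
      else transitive_on S (restr \<sigma> S) (restr \<alpha> S)
        \<and> (\<forall>x\<in>H. cyc \<sigma> x \<inter> S \<noteq> {})
        \<and> ncycles (restr \<sigma> S \<circ> restr \<alpha> S) S = 1)"

end

theory Submission
  imports Defs "HOL-Combinatorics.Cycles" "HOL-Combinatorics.Orbits"
begin

text \<open>Let \<open>t = \<sigma> \<circ> \<alpha>\<^sub>S\<close>, where \<open>\<alpha>\<^sub>S\<close> acts as \<open>\<alpha>\<close> on \<open>S\<close> and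
  as the identity on \<open>H - S\<close>. The restriction of \<open>t\<close> to \<open>S\<close> is the face permutation of
  \<open>M\<^sub>|\<^sub>S\<close>, and \<open>t\<close> agrees with \<open>\<sigma>\<close> along any vertex avoiding \<open>S\<close>; hence
  \<open>(M,S)\<close> is covered iff \<open>t\<close> is a single cycle on \<open>H\<close>. For the dual,
  \<open>\<phi> \<circ> \<alpha>\<^sub>H\<^sub>-\<^sub>S = \<sigma> \<circ> \<alpha> \<circ> \<alpha>\<^sub>H\<^sub>-\<^sub>S = t\<close>, so \<open>(M\<^sup>*, H - S)\<close> is covered too.

  A unicellular \<open>M\<^sub>|\<^sub>S\<close> with the vertices of \<open>M\<close> has \<open>2 g(M\<^sub>|\<^sub>S) = 1 - v + e(S)\<close>,
  and dually \<open>2 g(M\<^sup>*\<^sub>|\<^sub>H\<^sub>-\<^sub>S) = 1 - f + e(H - S)\<close>; the sum is \<open>2 - v + e - f = 2 g(M)\<close>.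
  Since the genus is defined by integer division, the parity of these Euler characteristics
  is needed: it comes from the sign of a permutation \<open>p\<close> of \<open>X\<close> being
  \<open>(-1)\<^bsup>|X| + #cycles(p)\<^esup>\<close>, proved by counting how a transposition splits or merges cycles.\<close>

lemma funpow_agree:
  assumes "\<And>i. i < n \<Longrightarrow> g ((f ^^ i) x) = f ((f ^^ i) x)"
  shows "(g ^^ n) x = (f ^^ n) x"
  using assms by (induct n) auto

lemma funpow_agree_after_step:
  assumes "\<And>i. 0 < i \<Longrightarrow> i \<le> n \<Longrightarrow> g ((f ^^ i) x) = f ((f ^^ i) x)"
  shows "(g ^^ n) (f x) = (f ^^ Suc n) x"
  using assms
proof (induct n)
  case (Suc n)
  then show ?case using Suc.prems[of "Suc n"] by simp
qed simp

lemma funpow_add_apply: "(f ^^ m) ((f ^^ n) x) = (f ^^ (m + n)) x"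
  by (simp add: funpow_add)

lemma funpow_Suc_apply: "(f ^^ Suc n) x = (f ^^ n) (f x)"
  by (simp only: funpow_Suc_right comp_apply)

lemma funpow_inj_below_least_power:
  assumes "permutation p" "i < least_power p a" "j < least_power p a" "(p ^^ i) a = (p ^^ j) a"
  shows "i = j"
proof -
  have contra: "False" if "i < j" "j < least_power p a" "(p ^^ i) a = (p ^^ j) a" for i j
  proof -
    have "(p ^^ (j - i)) a = a"
      using funpow_diff[OF bij_is_inj[OF permutation_bijective[OF assms(1)]]] that by simp
    then have "least_power p a \<le> j - i" by (rule least_power_le) (use that in simp)
    then show False using that by simp
  qed
  show ?thesis
    using assms(2-4) contra[of i j] contra[of j i] by (metis linorder_neqE_nat)
qed

lemma cyc_self: "x \<in> cyc f x"
  unfolding cyc_def by (auto intro: exI[of _ 0])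

lemma funpow_in_cyc: "(f ^^ n) x \<in> cyc f x"
  unfolding cyc_def by auto

lemma cyc_subset_of_mem: "y \<in> cyc f x \<Longrightarrow> cyc f y \<subseteq> cyc f x"
  unfolding cyc_def by auto (metis comp_apply funpow_add)

lemma cyc_subset_of_stable: "f ` A \<subseteq> A \<Longrightarrow> x \<in> A \<Longrightarrow> cyc f x \<subseteq> A"
proof -
  assume "f ` A \<subseteq> A" "x \<in> A"
  then have "(f ^^ n) x \<in> A" for n by (induct n) auto
  then show ?thesis unfolding cyc_def by auto
qed

lemma cyc_subset: "p permutes X \<Longrightarrow> x \<in> X \<Longrightarrow> cyc p x \<subseteq> X"
  by (rule cyc_subset_of_stable) (auto simp: permutes_image)

lemma cyc_period:
  assumes "(f ^^ m) x = x" "0 < m"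
  shows "cyc f x = {(f ^^ n) x | n. n < m}"
proof -
  have "(f ^^ k) x = (f ^^ (k mod m)) x \<and> k mod m < m" for k
    using assms by (simp add: funpow_mod_eq)
  then show ?thesis unfolding cyc_def by blast
qed

lemma cyc_eq_orbit: "permutation p \<Longrightarrow> cyc p x = orbit p x"
  unfolding cyc_def by (rule orbit_altdef_permutation[symmetric])

lemma cyc_sym:
  assumes "permutation p" "y \<in> cyc p x"
  shows "x \<in> cyc p y"
  using assms(2) unfolding cyc_eq_orbit[OF assms(1)]
  by (rule orbit_swap[OF permutation_self_in_orbit[OF assms(1)]])

lemma cyc_eq_of_mem: "permutation p \<Longrightarrow> y \<in> cyc p x \<Longrightarrow> cyc p y = cyc p x"
  using cyc_subset_of_mem cyc_sym by (metis subset_antisym)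

lemma cyc_disjoint:
  assumes "permutation p" "cyc p x \<noteq> cyc p y"
  shows "cyc p x \<inter> cyc p y = {}"
  using assms cyc_eq_of_mem[OF assms(1)] by blast

lemma cyc_step: "permutation p \<Longrightarrow> cyc p (p x) = cyc p x"
  by (simp add: cyc_eq_orbit permutation_orbit_step)

lemma cyc_closed: "y \<in> cyc f x \<Longrightarrow> f y \<in> cyc f x"
  using cyc_subset_of_mem[of y f x] funpow_in_cyc[of 1 f y] by auto

lemma ncycles_cong: "(\<And>x. x \<in> A \<Longrightarrow> cyc q x = cyc p x) \<Longrightarrow> ncycles q A = ncycles p A"
  unfolding ncycles_def by (metis image_cong)

section \<open>Restriction of a permutation\<close>

lemma restr_eqI:
  assumes "x \<in> A" "0 < n" "(p ^^ n) x \<in> A" "\<And>j. 0 < j \<Longrightarrow> j < n \<Longrightarrow> (p ^^ j) x \<notin> A"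
  shows "restr p A x = (p ^^ n) x"
proof -
  have "(LEAST n. 0 < n \<and> (p ^^ n) x \<in> A) = n"
    by (rule Least_equality) (use assms in \<open>auto simp: not_less[symmetric]\<close>)
  then show ?thesis using assms(1) unfolding restr_def by simp
qed

lemma restr_outside: "x \<notin> A \<Longrightarrow> restr p A x = x"
  unfolding restr_def by simp

lemma restr_step: "x \<in> A \<Longrightarrow> p x \<in> A \<Longrightarrow> restr p A x = p x"
  using restr_eqI[of x A 1 p] by simp

lemma restr_funpowE:
  assumes "permutation p" "x \<in> A"
  obtains k where "0 < k" "restr p A x = (p ^^ k) x" "(p ^^ k) x \<in> A"
    "\<And>j. 0 < j \<Longrightarrow> j < k \<Longrightarrow> (p ^^ j) x \<notin> A"
proof -
  define k where "k = (LEAST n. 0 < n \<and> (p ^^ n) x \<in> A)"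
  have "0 < k \<and> (p ^^ k) x \<in> A"
    unfolding k_def
    by (rule LeastI[of _ "least_power p x"]) (use least_power_of_permutation[OF assms(1)] assms(2) in auto)
  moreover have "\<And>j. 0 < j \<Longrightarrow> j < k \<Longrightarrow> (p ^^ j) x \<notin> A"
    using not_less_Least k_def by blast
  ultimately show ?thesis
    using that[of k] assms(2) unfolding restr_def k_def by auto
qed

lemma restr_in: "permutation p \<Longrightarrow> x \<in> A \<Longrightarrow> restr p A x \<in> A"
  by (metis restr_funpowE)

lemma cyc_restr:
  assumes p: "permutation p" and "x \<in> A"
  shows "cyc (restr p A) x = cyc p x \<inter> A"
proof
  let ?r = "restr p A"
  have "(?r ^^ n) x \<in> cyc p x \<inter> A" for n
  proof (induct n)
    case 0
    then show ?case using \<open>x \<in> A\<close> cyc_self[of x p] by simp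
  next
    case (Suc n)
    then obtain k where "?r ((?r ^^ n) x) = (p ^^ k) ((?r ^^ n) x)" "(p ^^ k) ((?r ^^ n) x) \<in> A"
      using restr_funpowE[OF p] by (metis IntD2)
    moreover have "(p ^^ k) ((?r ^^ n) x) \<in> cyc p x"
      using Suc cyc_subset_of_mem funpow_in_cyc by fast
    ultimately show ?case by simp
  qed
  then show "cyc ?r x \<subseteq> cyc p x \<inter> A" unfolding cyc_def by auto
next
  let ?r = "restr p A"
  have "(p ^^ n) x \<in> cyc ?r x" if "x \<in> A" "(p ^^ n) x \<in> A" for n x
    using that
  proof (induct n arbitrary: x rule: less_induct)
    case (less n x)
    obtain k where k: "0 < k" "?r x = (p ^^ k) x" "\<And>j. 0 < j \<Longrightarrow> j < k \<Longrightarrow> (p ^^ j) x \<notin> A"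
      using restr_funpowE[OF p less(2)] by metis
    show ?case
    proof (cases "n = 0")
      case True
      then show ?thesis using cyc_self[of x ?r] by simp
    next
      case False
      with k(3) less(3) have "k \<le> n" by (meson not_le zero_less_iff_neq_zero)
      then have shift: "(p ^^ n) x = (p ^^ (n - k)) (?r x)"
        by (simp add: k(2) funpow_add_apply)
      have "(p ^^ (n - k)) (?r x) \<in> cyc ?r (?r x)"
        using less(1)[of "n - k" "?r x"] k(1) \<open>k \<le> n\<close> False restr_in[OF p less(2)] less(3)
        unfolding shift by simp
      moreover have "cyc ?r (?r x) \<subseteq> cyc ?r x"
        using cyc_subset_of_mem funpow_in_cyc[of 1 ?r x] by simp
      ultimately show ?thesis unfolding shift by blast
    qed
  qed
  then show "cyc p x \<inter> A \<subseteq> cyc ?r x" using \<open>x \<in> A\<close> unfolding cyc_def[of p] by auto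
qed

lemma restr_permutes:
  assumes p: "permutation p" and "finite A"
  shows "restr p A permutes A"
proof (rule bij_imp_permutes)
  have "x = y" if "x \<in> A" "y \<in> A" "restr p A x = restr p A y" for x y
  proof -
    have cancel: "x = y" if "x \<in> A" "y \<in> A" "(p ^^ kx) x = (p ^^ ky) y" "0 < kx" "kx \<le> ky"
      "\<And>j. 0 < j \<Longrightarrow> j < ky \<Longrightarrow> (p ^^ j) y \<notin> A" for x y kx ky
    proof -
      have "(p ^^ kx) x = (p ^^ kx) ((p ^^ (ky - kx)) y)"
        using that(3,5) by (simp add: funpow_add_apply)
      then have "x = (p ^^ (ky - kx)) y"
        using inj_fn[OF bij_is_inj[OF permutation_bijective[OF p]]] by (simp add: inj_eq)
      then show "x = y" using that(1,4) that(6)[of "ky - kx"] by (cases "ky - kx = 0") auto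
    qed
    obtain kx where "0 < kx" "restr p A x = (p ^^ kx) x"
      "\<And>j. 0 < j \<Longrightarrow> j < kx \<Longrightarrow> (p ^^ j) x \<notin> A"
      using restr_funpowE[OF p \<open>x \<in> A\<close>] by metis
    moreover obtain ky where "0 < ky" "restr p A y = (p ^^ ky) y"
      "\<And>j. 0 < j \<Longrightarrow> j < ky \<Longrightarrow> (p ^^ j) y \<notin> A"
      using restr_funpowE[OF p \<open>y \<in> A\<close>] by metis
    ultimately show "x = y" using that cancel by (metis nle_le)
  qed
  then have "inj_on (restr p A) A" by (rule inj_onI)
  moreover have "restr p A ` A \<subseteq> A" using restr_in[OF p] by auto
  ultimately show "bij_betw (restr p A) A A"
    unfolding bij_betw_def using endo_inj_surj[OF \<open>finite A\<close>] by blast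
qed (rule restr_outside)

lemma ncycles_restr_of_meets:
  assumes p: "permutation p" and "A \<subseteq> X" and meets: "\<forall>x\<in>X. cyc p x \<inter> A \<noteq> {}"
  shows "ncycles (restr p A) A = ncycles p X"
proof -
  have "cyc (restr p A) ` A = (\<lambda>C. C \<inter> A) ` cyc p ` A"
    using cyc_restr[OF p] by (auto simp: image_image)
  moreover have "inj_on (\<lambda>C. C \<inter> A) (cyc p ` A)"
  proof (rule inj_onI)
    fix C D assume "C \<in> cyc p ` A" "D \<in> cyc p ` A" and CD: "C \<inter> A = D \<inter> A"
    then obtain x y where "x \<in> A" "C = cyc p x" "D = cyc p y" by blast
    with CD have "x \<in> cyc p y" using cyc_self[of x p] by auto
    then show "C = D" using cyc_eq_of_mem[OF p, of x y] \<open>C = cyc p x\<close> \<open>D = cyc p y\<close> by simp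
  qed
  moreover have "cyc p ` A = cyc p ` X"
  proof
    show "cyc p ` X \<subseteq> cyc p ` A"
    proof
      fix C assume "C \<in> cyc p ` X"
      then obtain x a where "C = cyc p x" "a \<in> cyc p x" "a \<in> A" using meets by blast
      then have "C = cyc p a" using cyc_eq_of_mem[OF p, of a x] by simp
      then show "C \<in> cyc p ` A" using \<open>a \<in> A\<close> by simp
    qed
  qed (use \<open>A \<subseteq> X\<close> in auto)
  ultimately show ?thesis unfolding ncycles_def by (simp add: card_image)
qed

lemma ncycles_restr_stable:
  assumes "permutation p" "p ` A \<subseteq> A"
  shows "ncycles (restr p A) A = ncycles p A"
proof -
  have "cyc (restr p A) x = cyc p x" if "x \<in> A" for x
    using cyc_restr[OF assms(1) that] cyc_subset_of_stable[OF assms(2) that] by auto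
  then show ?thesis by (rule ncycles_cong)
qed

lemma ncycles_id: "ncycles id X = card X"
proof -
  have "cyc id ` X = (\<lambda>x. {x}) ` X" unfolding cyc_def by simp
  then show ?thesis unfolding ncycles_def by (simp add: card_image)
qed

lemma ncycles_Un:
  assumes "finite A" "finite B" "p ` A \<subseteq> A" "p ` B \<subseteq> B" "A \<inter> B = {}"
  shows "ncycles p (A \<union> B) = ncycles p A + ncycles p B"
proof -
  have "cyc p a \<noteq> cyc p b" if "a \<in> A" "b \<in> B" for a b
    using cyc_subset_of_stable[OF assms(3) that(1)] cyc_self[of b p] that(2) assms(5) by auto
  then have "cyc p ` A \<inter> cyc p ` B = {}" by blast
  then show ?thesis unfolding ncycles_def image_Un using assms(1,2) by (simp add: card_Un_disjoint)
qed

lemma card_eq_twice_ncycles_involution: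
  assumes p: "permutation p" and "finite A" "p ` A \<subseteq> A" and inv: "\<forall>x\<in>A. p (p x) = x \<and> p x \<noteq> x"
  shows "card A = 2 * ncycles p A"
proof -
  have cyc2: "cyc p x = {x, p x}" if "x \<in> A" for x
  proof -
    have "(p ^^ 2) x = x" using inv that by (simp add: numeral_2_eq_2)
    then have "cyc p x = {(p ^^ n) x | n. n < 2}" by (simp add: cyc_period)
    also have "\<dots> = {x, p x}" by (auto simp: less_2_cases_iff intro: exI[of _ 0] exI[of _ "Suc 0"])
    finally show ?thesis .
  qed
  have union: "\<Union>(cyc p ` A) = A"
  proof
    show "\<Union>(cyc p ` A) \<subseteq> A" using cyc_subset_of_stable[OF assms(3)] by blast
    show "A \<subseteq> \<Union>(cyc p ` A)" using cyc_self by fast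
  qed
  have "card (\<Union>(cyc p ` A)) = 2 * card (cyc p ` A)"
  proof (rule card_partition[symmetric])
    show "finite (cyc p ` A)" "finite (\<Union>(cyc p ` A))" using \<open>finite A\<close> union by simp_all
    show "card C = 2" if "C \<in> cyc p ` A" for C
      using that cyc2 inv by (metis card_2_iff imageE)
    show "C \<inter> D = {}" if "C \<in> cyc p ` A" "D \<in> cyc p ` A" "C \<noteq> D" for C D
      using that cyc_disjoint[OF p] by blast
  qed
  then show ?thesis unfolding ncycles_def union .
qed

lemma cyc_eq_of_ncycles_1:
  assumes "p permutes X" "x \<in> X" "ncycles p X = 1"
  shows "cyc p x = X"
proof -
  obtain C where C: "cyc p ` X = {C}"
    using assms(3) unfolding ncycles_def by (rule card_1_singletonE)
  then have "X \<subseteq> C" using cyc_self by fast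
  then show ?thesis using C assms(2) cyc_subset[OF assms(1,2)] by blast
qed

lemma ncycles_eq_1I:
  assumes "X \<noteq> {}" "\<And>x. x \<in> X \<Longrightarrow> cyc p x = X"
  shows "ncycles p X = 1"
proof -
  have "cyc p ` X = {X}" using assms by auto
  then show ?thesis unfolding ncycles_def by simp
qed

section \<open>Parity of the number of cycles\<close>

lemma cyc_comp_transpose_outside:
  assumes "a \<notin> cyc p x" "b \<notin> cyc p x"
  shows "cyc (p \<circ> transpose a b) x = cyc p x"
proof -
  have "((p \<circ> transpose a b) ^^ n) x = (p ^^ n) x" for n
  proof (rule funpow_agree)
    fix i
    have "(p ^^ i) x \<noteq> a" "(p ^^ i) x \<noteq> b" using assms funpow_in_cyc[of i p x] by auto
    then show "(p \<circ> transpose a b) ((p ^^ i) x) = p ((p ^^ i) x)" by simp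
  qed
  then show ?thesis unfolding cyc_def by simp
qed

text \<open>Composing with the transposition of \<open>a\<close> and \<open>b = p\<^sup>k a\<close> splits the \<open>p\<close>-cycle of \<open>a\<close>
  into two arcs: from \<open>b\<close> one follows \<open>p a, \<dots>, p\<^sup>k a\<close>, from \<open>a\<close> the rest of the cycle.\<close>

lemma funpow_comp_transpose_arcs:
  assumes p: "permutation p" and k: "0 < k" "k < least_power p a"
  defines "r \<equiv> p \<circ> transpose a ((p ^^ k) a)"
  shows "Suc j \<le> k \<Longrightarrow> (r ^^ Suc j) ((p ^^ k) a) = (p ^^ Suc j) a"
    and "Suc j + k \<le> least_power p a \<Longrightarrow> (r ^^ Suc j) a = (p ^^ (Suc j + k)) a"
proof -
  define b where "b = (p ^^ k) a"
  have r_off: "r ((p ^^ i) a) = p ((p ^^ i) a)" if "0 < i" "i < least_power p a" "i \<noteq> k" for i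
  proof -
    have "(p ^^ i) a \<noteq> a" "(p ^^ i) a \<noteq> b"
      using funpow_inj_below_least_power[OF p, of i a 0] funpow_inj_below_least_power[OF p, of i a k]
        that k unfolding b_def by auto
    then show ?thesis unfolding r_def b_def by simp
  qed
  show "(r ^^ Suc j) ((p ^^ k) a) = (p ^^ Suc j) a" if "Suc j \<le> k"
  proof -
    have "(r ^^ Suc j) ((p ^^ k) a) = (r ^^ j) (p a)" unfolding funpow_Suc_apply by (simp add: r_def)
    also have "\<dots> = (p ^^ Suc j) a"
      by (rule funpow_agree_after_step) (use r_off that k in auto)
    finally show ?thesis .
  qed
  show "(r ^^ Suc j) a = (p ^^ (Suc j + k)) a" if "Suc j + k \<le> least_power p a"
  proof -
    have "(r ^^ Suc j) a = (r ^^ j) (p b)" unfolding funpow_Suc_apply by (simp add: r_def b_def)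
    also have "\<dots> = (p ^^ Suc j) b"
    proof (rule funpow_agree_after_step)
      fix i assume "0 < i" "i \<le> j"
      then show "r ((p ^^ i) b) = p ((p ^^ i) b)"
        using r_off[of "i + k"] that unfolding b_def funpow_add_apply by simp
    qed
    also have "\<dots> = (p ^^ (Suc j + k)) a" unfolding b_def funpow_add_apply ..
    finally show ?thesis .
  qed
qed

lemma cyc_comp_transpose_split:
  assumes p: "permutation p" and "a \<noteq> b" "b \<in> cyc p a"
  defines "r \<equiv> p \<circ> transpose a b"
  shows "cyc p a \<subseteq> cyc r a \<union> cyc r b" and "a \<notin> cyc r b"
proof -
  define L where "L = least_power p a"
  have L: "(p ^^ L) a = a" "0 < L"
    using least_power_of_permutation[OF p] unfolding L_def by auto
  have cyc_a: "cyc p a = {(p ^^ n) a | n. n < L}" using cyc_period[OF L] .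
  obtain k where k: "b = (p ^^ k) a" "k < L" using assms(3) cyc_a by auto
  have "0 < k" using k \<open>a \<noteq> b\<close> by (metis funpow_0 gr0I)
  note arcs = funpow_comp_transpose_arcs[OF p \<open>0 < k\<close> k(2)[unfolded L_def], folded k(1), folded r_def L_def]
  show "cyc p a \<subseteq> cyc r a \<union> cyc r b"
  proof
    fix x assume "x \<in> cyc p a"
    then obtain j where j: "x = (p ^^ j) a" "j < L" using cyc_a by auto
    consider "j = 0" | "0 < j" "j \<le> k" | "k < j" by linarith
    then show "x \<in> cyc r a \<union> cyc r b"
    proof cases
      case 1
      then show ?thesis using j cyc_self by auto
    next
      case 2
      then have "x = (r ^^ Suc (j - 1)) b" using arcs(1)[of "j - 1"] j by simp
      then show ?thesis using funpow_in_cyc by fast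
    next
      case 3
      then have "x = (r ^^ Suc (j - k - 1)) a" using arcs(2)[of "j - k - 1"] j by simp
      then show ?thesis using funpow_in_cyc by fast
    qed
  qed
  have "(r ^^ k) b = b" using arcs(1)[of "k - 1"] \<open>0 < k\<close> k(1) by simp
  then have "cyc r b = {(r ^^ n) b | n. n < k}" using \<open>0 < k\<close> by (rule cyc_period)
  moreover have "(r ^^ n) b \<noteq> a" if "n < k" for n
  proof (cases n)
    case 0
    then show ?thesis using \<open>a \<noteq> b\<close> by simp
  next
    case (Suc j)
    then show ?thesis
      using arcs(1)[of j] funpow_inj_below_least_power[OF p, of n a 0] that k(2) L(2)
      unfolding L_def by auto
  qed
  ultimately show "a \<notin> cyc r b" by auto
qed

lemma ncycles_comp_transpose_cycle:
  assumes p: "permutation p" and "a \<noteq> b" "b \<in> cyc p a"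
  shows "ncycles (p \<circ> transpose a b) (cyc p a) = 2"
proof -
  define r where "r = p \<circ> transpose a b"
  have perm_r: "permutation r" using p unfolding r_def by (simp add: permutation_compose permutation_swap_id)
  have "cyc r x \<in> {cyc r a, cyc r b}" if "x \<in> cyc p a" for x
  proof -
    have "x \<in> cyc r a \<or> x \<in> cyc r b"
      using that cyc_comp_transpose_split(1)[OF assms] unfolding r_def by blast
    then show ?thesis using cyc_eq_of_mem[OF perm_r, of x a] cyc_eq_of_mem[OF perm_r, of x b] by auto
  qed
  then have "cyc r ` cyc p a \<subseteq> {cyc r a, cyc r b}" by (rule image_subsetI)
  moreover have "{cyc r a, cyc r b} \<subseteq> cyc r ` cyc p a" using cyc_self[of a p] assms(3) by simp
  ultimately have "cyc r ` cyc p a = {cyc r a, cyc r b}" by (rule subset_antisym)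
  moreover have "cyc r a \<noteq> cyc r b"
    using cyc_comp_transpose_split(2)[OF assms] cyc_self[of a r] unfolding r_def by auto
  ultimately show ?thesis unfolding ncycles_def r_def by simp
qed

lemma image_diff_cyc_subset:
  assumes "p permutes X" "permutation p"
  shows "p ` (X - cyc p a) \<subseteq> X - cyc p a"
proof (rule image_subsetI)
  fix x assume x: "x \<in> X - cyc p a"
  have "p x \<notin> cyc p a"
  proof
    assume "p x \<in> cyc p a"
    then have "cyc p x = cyc p a" using cyc_eq_of_mem[OF assms(2), of "p x" a] cyc_step[OF assms(2), of x] by simp
    then show False using x cyc_self[of x p] by auto
  qed
  then show "p x \<in> X - cyc p a" using x permutes_in_image[OF assms(1)] by simp
qed

lemma ncycles_comp_transpose_split:
  assumes p: "p permutes X" and "finite X" "a \<in> X" "a \<noteq> b" "b \<in> cyc p a"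
  shows "ncycles (p \<circ> transpose a b) X = Suc (ncycles p X)"
proof -
  define r where "r = p \<circ> transpose a b"
  define C where "C = cyc p a"
  have perm: "permutation p" using p \<open>finite X\<close> permutation_permutes by blast
  have "C \<subseteq> X" unfolding C_def by (rule cyc_subset[OF p \<open>a \<in> X\<close>])
  have "a \<in> C" "b \<in> C" using cyc_self \<open>b \<in> cyc p a\<close> unfolding C_def by auto
  have cyc_C: "cyc p x = C" if "x \<in> C" for x
    using cyc_eq_of_mem[OF perm, of x a] that unfolding C_def by blast
  have finite: "finite C" "finite (X - C)" using \<open>C \<subseteq> X\<close> \<open>finite X\<close> finite_subset by auto
  have p_C: "p ` C \<subseteq> C" using cyc_closed[of _ p a] unfolding C_def by auto
  have p_rest: "p ` (X - C) \<subseteq> X - C" unfolding C_def by (rule image_diff_cyc_subset[OF p perm])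
  have "r ` C \<subseteq> C"
    using p_C \<open>a \<in> C\<close> \<open>b \<in> C\<close> unfolding r_def by (auto simp: transpose_def)
  have r_rest: "r x = p x" if "x \<in> X - C" for x
  proof -
    have "x \<noteq> a" "x \<noteq> b" using that \<open>a \<in> C\<close> \<open>b \<in> C\<close> by auto
    then show ?thesis unfolding r_def by simp
  qed
  then have "r ` (X - C) \<subseteq> X - C" using p_rest by auto
  then have "ncycles r X = ncycles r C + ncycles r (X - C)"
    using ncycles_Un[OF finite \<open>r ` C \<subseteq> C\<close>] \<open>C \<subseteq> X\<close> by (metis Diff_disjoint Diff_partition)
  moreover have "ncycles p X = ncycles p C + ncycles p (X - C)"
    using ncycles_Un[OF finite p_C p_rest] \<open>C \<subseteq> X\<close> by (metis Diff_disjoint Diff_partition)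
  moreover have "ncycles r (X - C) = ncycles p (X - C)"
  proof (rule ncycles_cong)
    fix x assume "x \<in> X - C"
    have "x \<notin> cyc p y" if "y \<in> C" for y
      using cyc_C[OF that] \<open>x \<in> X - C\<close> by simp
    then have "a \<notin> cyc p x" "b \<notin> cyc p x"
      using cyc_sym[OF perm] \<open>a \<in> C\<close> \<open>b \<in> C\<close> by blast+
    then show "cyc r x = cyc p x" unfolding r_def by (rule cyc_comp_transpose_outside)
  qed
  moreover have "ncycles p C = 1"
    using cyc_C \<open>a \<in> C\<close> by (intro ncycles_eq_1I) auto
  moreover have "ncycles r C = 2"
    unfolding r_def C_def by (rule ncycles_comp_transpose_cycle[OF perm \<open>a \<noteq> b\<close> \<open>b \<in> cyc p a\<close>])
  ultimately show ?thesis unfolding r_def by simp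
qed

lemma odd_ncycles_comp_transpose:
  assumes p: "p permutes X" and "finite X" "a \<in> X" "b \<in> X" "a \<noteq> b"
  shows "odd (ncycles (p \<circ> transpose a b) X + ncycles p X)"
proof (cases "b \<in> cyc p a")
  case True
  then show ?thesis using ncycles_comp_transpose_split[OF p \<open>finite X\<close> \<open>a \<in> X\<close> \<open>a \<noteq> b\<close>] by simp
next
  case False
  \<comment> \<open>the transposition merges the cycles of a and b, so undoing it splits a cycle\<close>
  define r where "r = p \<circ> transpose a b"
  have perm: "permutation p" using p \<open>finite X\<close> permutation_permutes by blast
  define M where "M = least_power p b"
  have M: "(p ^^ M) b = b" "0 < M"
    using least_power_of_permutation[OF perm] unfolding M_def by auto
  have "(r ^^ M) a = (r ^^ (M - 1)) (p b)"
    using M(2) funpow_Suc_apply[of "M - 1" r a] unfolding r_def by simp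
  also have "\<dots> = (p ^^ M) b"
  proof -
    have "r ((p ^^ i) b) = p ((p ^^ i) b)" if "0 < i" "i \<le> M - 1" for i
    proof -
      have "i < least_power p b" using that M(2) unfolding M_def by simp
      then have "(p ^^ i) b \<noteq> b"
        using funpow_inj_below_least_power[OF perm, of i b 0] that(1) by auto
      moreover have "(p ^^ i) b \<noteq> a"
        using False cyc_sym[OF perm] funpow_in_cyc[of i p b] by metis
      ultimately show ?thesis unfolding r_def by simp
    qed
    then show ?thesis using funpow_agree_after_step[of "M - 1" r p b] M(2) by simp
  qed
  finally have "b \<in> cyc r a" using M(1) funpow_in_cyc by metis
  moreover have "r permutes X" unfolding r_def by (rule permutes_compose[OF permutes_swap_id p]) fact+
  moreover have "r \<circ> transpose a b = p" unfolding r_def by (simp add: comp_assoc)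
  ultimately have "ncycles p X = Suc (ncycles r X)"
    using ncycles_comp_transpose_split[of r X a b] assms by simp
  then show ?thesis unfolding r_def by simp
qed

lemma evenperm_iff_ncycles:
  assumes "finite X" "p permutes X"
  shows "evenperm p \<longleftrightarrow> even (card X + ncycles p X)"
  using assms
proof (induct p rule: permutes_rev_induct)
  case id
  then show ?case using ncycles_id[of X] unfolding id_def by simp
next
  case (swap a b p)
  have "permutation p" using swap.hyps(5) assms(1) permutation_permutes by blast
  then have "evenperm (p \<circ> transpose a b) \<longleftrightarrow> \<not> evenperm p"
    using \<open>a \<noteq> b\<close> by (simp add: evenperm_comp permutation_swap_id evenperm_swap)
  then show ?case
    using swap.hyps(4) odd_ncycles_comp_transpose[OF swap.hyps(5) assms(1) swap.hyps(1-3)] by presburger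
qed

lemma even_ncycles_comp:
  assumes "finite X" "p permutes X" "q permutes X"
  shows "even (ncycles (p \<circ> q) X + ncycles p X + ncycles q X + card X)"
proof -
  have "permutation p" "permutation q" using assms permutation_permutes by blast+
  then have "evenperm (p \<circ> q) \<longleftrightarrow> evenperm p = evenperm q" by (rule evenperm_comp)
  then show ?thesis
    using evenperm_iff_ncycles[OF assms(1,2)] evenperm_iff_ncycles[OF assms(1,3)]
      evenperm_iff_ncycles[OF assms(1) permutes_compose[OF assms(3,2)]] by presburger
qed

lemma perm_on_permutes: "perm_on \<pi> H \<Longrightarrow> \<pi> permutes H"
  unfolding perm_on_def by (intro bij_imp_permutes) auto

lemma is_mapD:
  assumes "is_map H \<sigma> \<alpha>"
  shows "finite H" "\<sigma> permutes H" "\<alpha> permutes H" "\<alpha> (\<alpha> x) = x" "y \<in> H \<Longrightarrow> \<alpha> y \<noteq> y"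
    "transitive_on H \<sigma> \<alpha>"
proof -
  have map: "finite H" "perm_on \<sigma> H" "perm_on \<alpha> H" "\<forall>x\<in>H. \<alpha> (\<alpha> x) = x \<and> \<alpha> x \<noteq> x"
    "transitive_on H \<sigma> \<alpha>"
    using assms unfolding is_map_def by auto
  then show "finite H" "\<sigma> permutes H" "\<alpha> permutes H" "y \<in> H \<Longrightarrow> \<alpha> y \<noteq> y" "transitive_on H \<sigma> \<alpha>"
    by (auto intro: perm_on_permutes)
  show "\<alpha> (\<alpha> x) = x"
    using map(4) permutes_not_in[OF perm_on_permutes[OF map(3)], of x] by (cases "x \<in> H") auto
qed

lemma transitive_on_if_cyc_comp:
  assumes "f ` S \<subseteq> S" "g ` S \<subseteq> S" and cyclic: "\<And>x. x \<in> S \<Longrightarrow> S \<subseteq> cyc (f \<circ> g) x"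
  shows "transitive_on S f g"
  unfolding transitive_on_def
proof (intro ballI)
  fix x y assume "x \<in> S" "y \<in> S"
  let ?R = "{(z, f z) |z. z \<in> S} \<union> {(z, g z) |z. z \<in> S}"
  have "(x, ((f \<circ> g) ^^ n) x) \<in> ?R\<^sup>* \<and> ((f \<circ> g) ^^ n) x \<in> S" for n
  proof (induct n)
    case (Suc n)
    define z where "z = ((f \<circ> g) ^^ n) x"
    have z: "(x, z) \<in> ?R\<^sup>*" "z \<in> S" using Suc unfolding z_def by blast+
    have "g z \<in> S" "f (g z) \<in> S" using z(2) assms(1,2) by auto
    then have "(z, g z) \<in> ?R" "(g z, f (g z)) \<in> ?R" using z(2) by auto
    then have "(x, f (g z)) \<in> ?R\<^sup>*" using z(1) by (blast intro: rtrancl_into_rtrancl)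
    moreover have "((f \<circ> g) ^^ Suc n) x = f (g z)" unfolding z_def by simp
    ultimately show ?case using \<open>f (g z) \<in> S\<close> by (simp only:)
  qed (use \<open>x \<in> S\<close> in simp)
  moreover obtain n where "y = ((f \<circ> g) ^^ n) x"
    using cyclic[OF \<open>x \<in> S\<close>] \<open>y \<in> S\<close> unfolding cyc_def by blast
  ultimately show "(x, y) \<in> ?R\<^sup>*" by blast
qed

lemma transitive_on_dual:
  assumes "transitive_on H \<sigma> \<alpha>" "\<alpha> ` H \<subseteq> H" "\<And>x. \<alpha> (\<alpha> x) = x"
  shows "transitive_on H (\<sigma> \<circ> \<alpha>) \<alpha>"
  unfolding transitive_on_def
proof (intro ballI)
  fix x y assume "x \<in> H" "y \<in> H"
  let ?R = "{(z, \<sigma> z) |z. z \<in> H} \<union> {(z, \<alpha> z) |z. z \<in> H}"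
  let ?R' = "{(z, (\<sigma> \<circ> \<alpha>) z) |z. z \<in> H} \<union> {(z, \<alpha> z) |z. z \<in> H}"
  have "?R \<subseteq> ?R'\<^sup>*"
  proof
    fix e assume "e \<in> ?R"
    then obtain z where z: "z \<in> H" "e = (z, \<sigma> z) \<or> e = (z, \<alpha> z)" by blast
    have "(z, \<alpha> z) \<in> ?R'" using z(1) by blast
    moreover have "(\<alpha> z, \<sigma> z) \<in> ?R'" using z(1) assms(2,3) by force
    ultimately show "e \<in> ?R'\<^sup>*" using z(2) by (meson r_into_rtrancl rtrancl_into_rtrancl)
  qed
  then have "?R\<^sup>* \<subseteq> ?R'\<^sup>*" by (rule rtrancl_subset_rtrancl)
  moreover have "(x, y) \<in> ?R\<^sup>*" using assms(1) \<open>x \<in> H\<close> \<open>y \<in> H\<close> unfolding transitive_on_def by blast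
  ultimately show "(x, y) \<in> ?R'\<^sup>*" by blast
qed

section \<open>The tour of a spanned map\<close>

text \<open>The motion function of Bernardi's tour of the submap on \<open>S\<close>: an edge of \<open>S\<close> is
  crossed before turning around the vertex, an edge outside \<open>S\<close> is skipped.\<close>
definition tour :: "'a set \<Rightarrow> ('a \<Rightarrow> 'a) \<Rightarrow> ('a \<Rightarrow> 'a) \<Rightarrow> 'a \<Rightarrow> 'a" where
  "tour S \<sigma> \<alpha> h = (if h \<in> S then \<sigma> (\<alpha> h) else \<sigma> h)"

lemma tour_permutes:
  assumes "\<sigma> permutes H" "S \<subseteq> H" "\<alpha> ` S \<subseteq> S" "\<And>x. x \<in> S \<Longrightarrow> \<alpha> (\<alpha> x) = x"
  shows "tour S \<sigma> \<alpha> permutes H"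
proof -
  define \<beta> where "\<beta> x = (if x \<in> S then \<alpha> x else x)" for x
  have "\<beta> (\<beta> x) = x" for x using assms(3,4) unfolding \<beta>_def by (cases "x \<in> S") auto
  moreover have "\<beta> ` H \<subseteq> H" using assms(2,3) unfolding \<beta>_def by auto
  ultimately have "bij_betw \<beta> H H" by (intro bij_betw_byWitness[of H \<beta>]) auto
  then have "\<beta> permutes H" by (rule bij_imp_permutes) (use assms(2) \<beta>_def in auto)
  moreover have "tour S \<sigma> \<alpha> = \<sigma> \<circ> \<beta>" unfolding tour_def \<beta>_def by auto
  ultimately show ?thesis using permutes_compose assms(1) by metis
qed

lemma restr_tour:
  assumes p: "permutation \<sigma>" and "\<alpha> ` S \<subseteq> S"
  shows "restr (tour S \<sigma> \<alpha>) S = restr \<sigma> S \<circ> restr \<alpha> S"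
proof
  fix x
  let ?t = "tour S \<sigma> \<alpha>"
  show "restr ?t S x = (restr \<sigma> S \<circ> restr \<alpha> S) x"
  proof (cases "x \<in> S")
    case False
    then show ?thesis by (simp add: restr_outside)
  next
    case True
    define y where "y = \<alpha> x"
    have "y \<in> S" using True assms(2) y_def by auto
    then have "restr \<alpha> S x = y" unfolding y_def by (intro restr_step True)
    obtain k where k: "0 < k" "restr \<sigma> S y = (\<sigma> ^^ k) y" "(\<sigma> ^^ k) y \<in> S"
      "\<And>j. 0 < j \<Longrightarrow> j < k \<Longrightarrow> (\<sigma> ^^ j) y \<notin> S"
      using restr_funpowE[OF p \<open>y \<in> S\<close>] by metis
    have arc: "(?t ^^ j) x = (\<sigma> ^^ j) y" if "0 < j" "j \<le> k" for j
    proof -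
      have "(?t ^^ j) x = (?t ^^ (j - 1)) (\<sigma> y)"
        using funpow_Suc_apply[of "j - 1" ?t x] True that(1) unfolding y_def tour_def by simp
      also have "\<dots> = (\<sigma> ^^ j) y"
        using funpow_agree_after_step[of "j - 1" ?t \<sigma> y] k(4) that unfolding tour_def by simp
      finally show ?thesis .
    qed
    have "restr ?t S x = (?t ^^ k) x"
      by (rule restr_eqI[OF True k(1)]) (use arc k in auto)
    then show ?thesis using arc[of k] k(1,2) \<open>restr \<alpha> S x = y\<close> by simp
  qed
qed

lemma tour_reaches_from:
  assumes p: "permutation \<sigma>" and inv: "\<And>s. s \<in> S \<Longrightarrow> \<alpha> s \<in> S \<and> \<alpha> (\<alpha> s) = s"
    and "cyc \<sigma> h \<inter> S \<noteq> {}"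
  obtains s where "s \<in> S" "h \<in> cyc (tour S \<sigma> \<alpha>) s"
proof -
  let ?t = "tour S \<sigma> \<alpha>"
  let ?P = "\<lambda>k. \<exists>s\<in>S. (\<sigma> ^^ k) s = h"
  obtain s where "s \<in> cyc \<sigma> h" "s \<in> S" using assms(3) by blast
  moreover obtain k where "(\<sigma> ^^ k) s = h"
    using cyc_sym[OF p \<open>s \<in> cyc \<sigma> h\<close>] unfolding cyc_def by blast
  ultimately have "?P k" by blast
  \<comment> \<open>go back along the vertex of h to the last half-edge of S before h\<close>
  define k0 where "k0 = (LEAST k. ?P k)"
  obtain s0 where s0: "s0 \<in> S" "(\<sigma> ^^ k0) s0 = h"
    using LeastI[of ?P, OF \<open>?P k\<close>] unfolding k0_def by blast
  show ?thesis
  proof (cases "k0 = 0")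
    case True
    then show ?thesis using that[of h] s0 cyc_self[of h] by simp
  next
    case False
    then have k0: "k0 = Suc (k0 - 1)" by simp
    have not_in_S: "(\<sigma> ^^ j) s0 \<notin> S" if "0 < j" "j < k0" for j
    proof
      assume "(\<sigma> ^^ j) s0 \<in> S"
      moreover have "(\<sigma> ^^ (k0 - j)) ((\<sigma> ^^ j) s0) = h"
        using s0(2) that by (simp add: funpow_add_apply)
      ultimately have "?P (k0 - j)" by blast
      then have "k0 \<le> k0 - j" unfolding k0_def by (rule Least_le)
      then show False using that by simp
    qed
    have "?t ((\<sigma> ^^ i) s0) = \<sigma> ((\<sigma> ^^ i) s0)" if "0 < i" "i \<le> k0 - 1" for i
      using not_in_S[of i] that unfolding tour_def by simp
    then have "(?t ^^ (k0 - 1)) (\<sigma> s0) = (\<sigma> ^^ Suc (k0 - 1)) s0"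
      by (rule funpow_agree_after_step)
    moreover have "?t (\<alpha> s0) = \<sigma> s0" using inv[OF s0(1)] unfolding tour_def by simp
    ultimately have "(?t ^^ k0) (\<alpha> s0) = h"
      using funpow_Suc_apply[of "k0 - 1" ?t "\<alpha> s0"] s0(2) k0 by simp
    then have "h \<in> cyc ?t (\<alpha> s0)" using funpow_in_cyc[of k0 ?t "\<alpha> s0"] by simp
    then show ?thesis using that[of "\<alpha> s0"] inv[OF s0(1)] by blast
  qed
qed

lemma tour_single_cycle:
  assumes "\<sigma> permutes H" "finite H" "S \<subseteq> H" "S \<noteq> {}"
    and inv: "\<And>s. s \<in> S \<Longrightarrow> \<alpha> s \<in> S \<and> \<alpha> (\<alpha> s) = s"
    and unicellular: "ncycles (restr \<sigma> S \<circ> restr \<alpha> S) S = 1"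
    and meets: "\<forall>x\<in>H. cyc \<sigma> x \<inter> S \<noteq> {}"
  shows "ncycles (tour S \<sigma> \<alpha>) H = 1"
proof -
  let ?t = "tour S \<sigma> \<alpha>"
  have p: "permutation \<sigma>" using assms(1,2) permutation_permutes by blast
  have t: "?t permutes H" using tour_permutes[OF assms(1,3)] inv by blast
  then have pt: "permutation ?t" using assms(2) permutation_permutes by blast
  have "\<alpha> ` S \<subseteq> S" using inv by blast
  obtain s0 where "s0 \<in> S" using assms(4) by blast
  have "finite S" using assms(2,3) finite_subset by blast
  then have "restr ?t S permutes S" by (rule restr_permutes[OF pt])
  moreover have "ncycles (restr ?t S) S = 1"
    using unicellular restr_tour[OF p \<open>\<alpha> ` S \<subseteq> S\<close>] by simp
  ultimately have "cyc (restr ?t S) s0 = S" using \<open>s0 \<in> S\<close> by (intro cyc_eq_of_ncycles_1)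
  then have S_sub: "S \<subseteq> cyc ?t s0" using cyc_restr[OF pt \<open>s0 \<in> S\<close>] by blast
  have "H \<subseteq> cyc ?t s0"
  proof
    fix h assume "h \<in> H"
    then have "cyc \<sigma> h \<inter> S \<noteq> {}" using meets by blast
    then obtain s where "s \<in> S" "h \<in> cyc ?t s" using tour_reaches_from[OF p inv] by blast
    then show "h \<in> cyc ?t s0" using S_sub cyc_subset_of_mem[of s ?t s0] by blast
  qed
  moreover have "cyc ?t s0 \<subseteq> H" using cyc_subset[OF t] \<open>s0 \<in> S\<close> assms(3) by blast
  ultimately have "cyc ?t s0 = H" by (rule subset_antisym[rotated])
  moreover have "cyc ?t x = cyc ?t s0" if "x \<in> H" for x
    using cyc_eq_of_mem[OF pt, of x s0] that \<open>cyc ?t s0 = H\<close> by simp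
  ultimately show ?thesis using assms(3,4) by (intro ncycles_eq_1I) auto
qed

lemma covered_if_tour_single_cycle:
  assumes "\<sigma> permutes H" "\<alpha> permutes H" "finite H" "S \<subseteq> H" "S \<noteq> {}"
    and inv: "\<And>s. s \<in> S \<Longrightarrow> \<alpha> s \<in> S \<and> \<alpha> (\<alpha> s) = s"
    and single: "ncycles (tour S \<sigma> \<alpha>) H = 1"
  shows "transitive_on S (restr \<sigma> S) (restr \<alpha> S)"
    and "\<forall>x\<in>H. cyc \<sigma> x \<inter> S \<noteq> {}"
    and "ncycles (restr \<sigma> S \<circ> restr \<alpha> S) S = 1"
proof -
  let ?t = "tour S \<sigma> \<alpha>"
  have p: "permutation \<sigma>" "permutation \<alpha>" using assms(1-3) permutation_permutes by blast+
  have t: "?t permutes H" using tour_permutes[OF assms(1,4)] inv by blast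
  then have pt: "permutation ?t" using assms(3) permutation_permutes by blast
  have cyc_t: "cyc ?t x = H" if "x \<in> H" for x using cyc_eq_of_ncycles_1[OF t that single] .
  have "\<alpha> ` S \<subseteq> S" using inv by blast
  have cyc_R: "cyc (restr \<sigma> S \<circ> restr \<alpha> S) x = S" if "x \<in> S" for x
  proof -
    have "cyc (restr ?t S) x = S"
      using cyc_restr[OF pt that] cyc_t[of x] that assms(4) by auto
    then show ?thesis using restr_tour[OF p(1) \<open>\<alpha> ` S \<subseteq> S\<close>] by simp
  qed
  show "ncycles (restr \<sigma> S \<circ> restr \<alpha> S) S = 1" using assms(5) cyc_R by (rule ncycles_eq_1I)
  show "\<forall>x\<in>H. cyc \<sigma> x \<inter> S \<noteq> {}"
  proof (intro ballI notI)
    fix x assume "x \<in> H" and avoids: "cyc \<sigma> x \<inter> S = {}"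
    have "(?t ^^ n) x = (\<sigma> ^^ n) x" for n
    proof (rule funpow_agree)
      fix i
      have "(\<sigma> ^^ i) x \<notin> S" using avoids funpow_in_cyc[of i \<sigma> x] by blast
      then show "?t ((\<sigma> ^^ i) x) = \<sigma> ((\<sigma> ^^ i) x)" unfolding tour_def by simp
    qed
    then have "cyc \<sigma> x = H" using cyc_t[OF \<open>x \<in> H\<close>] unfolding cyc_def by simp
    then show False using avoids assms(4,5) by blast
  qed
  show "transitive_on S (restr \<sigma> S) (restr \<alpha> S)"
    using restr_in[OF p(1)] restr_in[OF p(2)] cyc_R by (intro transitive_on_if_cyc_comp) auto
qed

lemma covered_iff_tour_single_cycle:
  assumes "spanned H \<sigma> \<alpha> S"
  shows "covered H \<sigma> \<alpha> S \<longleftrightarrow> ncycles (tour S \<sigma> \<alpha>) H = 1"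
proof -
  have map: "is_map H \<sigma> \<alpha>" and S: "S \<subseteq> H" "\<alpha> ` S \<subseteq> S"
    using assms unfolding spanned_def by auto
  have inv: "\<alpha> s \<in> S \<and> \<alpha> (\<alpha> s) = s" if "s \<in> S" for s
    using that S(2) is_mapD(4)[OF map] by blast
  show ?thesis
  proof (cases "S = {}")
    case True
    then have "tour S \<sigma> \<alpha> = \<sigma>" unfolding tour_def by auto
    then show ?thesis using assms True unfolding covered_def by simp
  next
    case False
    have "covered H \<sigma> \<alpha> S \<longleftrightarrow> transitive_on S (restr \<sigma> S) (restr \<alpha> S)
        \<and> (\<forall>x\<in>H. cyc \<sigma> x \<inter> S \<noteq> {}) \<and> ncycles (restr \<sigma> S \<circ> restr \<alpha> S) S = 1"
      using assms False unfolding covered_def by simp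
    then show ?thesis
      using covered_if_tour_single_cycle[OF is_mapD(2,3,1)[OF map] S(1) False inv]
        tour_single_cycle[OF is_mapD(2,1)[OF map] S(1) False inv] by blast
  qed
qed

section \<open>Duality and genus\<close>

lemma spanned_dual:
  assumes "spanned H \<sigma> \<alpha> S"
  shows "spanned H (\<sigma> \<circ> \<alpha>) \<alpha> (H - S)"
proof -
  have map: "is_map H \<sigma> \<alpha>" and "\<alpha> ` S \<subseteq> S" using assms unfolding spanned_def by auto
  note M = is_mapD[OF map]
  have "perm_on (\<sigma> \<circ> \<alpha>) H"
    using map unfolding is_map_def perm_on_def by (auto intro: bij_betw_trans)
  moreover have "transitive_on H (\<sigma> \<circ> \<alpha>) \<alpha>"
    using transitive_on_dual[OF M(6)] permutes_image[OF M(3)] M(4) by blast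
  moreover have "\<alpha> ` (H - S) \<subseteq> H - S"
  proof (rule image_subsetI)
    fix x assume "x \<in> H - S"
    moreover have "\<alpha> x \<notin> S" using \<open>x \<in> H - S\<close> \<open>\<alpha> ` S \<subseteq> S\<close> M(4)[of x] by force
    ultimately show "\<alpha> x \<in> H - S" using permutes_in_image[OF M(3)] by simp
  qed
  ultimately show ?thesis using map unfolding spanned_def is_map_def by simp
qed

lemma tour_dual:
  assumes "\<And>x. \<alpha> (\<alpha> x) = x" "\<And>x. x \<notin> H \<Longrightarrow> \<alpha> x = x"
  shows "tour (H - S) (\<sigma> \<circ> \<alpha>) \<alpha> = tour S \<sigma> \<alpha>"
proof
  show "tour (H - S) (\<sigma> \<circ> \<alpha>) \<alpha> h = tour S \<sigma> \<alpha> h" for h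
    unfolding tour_def using assms[of h] by (cases "h \<in> H"; cases "h \<in> S") simp_all
qed

lemma covered_dual:
  assumes "covered H \<sigma> \<alpha> S"
  shows "covered H (\<sigma> \<circ> \<alpha>) \<alpha> (H - S)"
proof -
  have spanned: "spanned H \<sigma> \<alpha> S" using assms unfolding covered_def by simp
  then have map: "is_map H \<sigma> \<alpha>" unfolding spanned_def by simp
  have "tour (H - S) (\<sigma> \<circ> \<alpha>) \<alpha> = tour S \<sigma> \<alpha>"
    by (rule tour_dual[OF is_mapD(4)[OF map] permutes_not_in[OF is_mapD(3)[OF map]]])
  then show ?thesis
    using assms covered_iff_tour_single_cycle[OF spanned]
      covered_iff_tour_single_cycle[OF spanned_dual[OF spanned]] by simp
qed

lemma two_genus_restr_covered:
  assumes "covered H \<sigma> \<alpha> S"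
  shows "2 * genus S (restr \<sigma> S) (restr \<alpha> S) = 1 - int (ncycles \<sigma> H) + int (ncycles \<alpha> S)"
proof (cases "S = {}")
  case True
  then show ?thesis using assms unfolding covered_def genus_def ncycles_def by simp
next
  case False
  have map: "is_map H \<sigma> \<alpha>" and "S \<subseteq> H" "\<alpha> ` S \<subseteq> S"
    using assms unfolding covered_def spanned_def by auto
  note M = is_mapD[OF map]
  have p: "permutation \<sigma>" "permutation \<alpha>" using M(1-3) permutation_permutes by blast+
  have "finite S" using M(1) \<open>S \<subseteq> H\<close> finite_subset by blast
  have unicellular: "ncycles (restr \<sigma> S \<circ> restr \<alpha> S) S = 1"
    and meets: "\<forall>x\<in>H. cyc \<sigma> x \<inter> S \<noteq> {}"
    using assms False unfolding covered_def by auto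
  have vertices: "ncycles (restr \<sigma> S) S = ncycles \<sigma> H"
    by (rule ncycles_restr_of_meets[OF p(1) \<open>S \<subseteq> H\<close> meets])
  have edges: "ncycles (restr \<alpha> S) S = ncycles \<alpha> S"
    by (rule ncycles_restr_stable[OF p(2) \<open>\<alpha> ` S \<subseteq> S\<close>])
  have "card S = 2 * ncycles \<alpha> S"
    using card_eq_twice_ncycles_involution[OF p(2) \<open>finite S\<close> \<open>\<alpha> ` S \<subseteq> S\<close>] M(4,5) \<open>S \<subseteq> H\<close> by blast
  moreover have "even (ncycles (restr \<sigma> S \<circ> restr \<alpha> S) S + ncycles (restr \<sigma> S) S
      + ncycles (restr \<alpha> S) S + card S)"
    using even_ncycles_comp[OF \<open>finite S\<close> restr_permutes[OF p(1)] restr_permutes[OF p(2)]] \<open>finite S\<close> by blast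
  ultimately have "even (1 + ncycles \<sigma> H + ncycles \<alpha> S)"
    unfolding unicellular vertices edges by presburger
  moreover have "even (2 - int v + int a - int 1)" if "even (1 + v + a)" for v a
    using that by presburger
  ultimately have "even (2 - int (ncycles \<sigma> H) + int (ncycles \<alpha> S) - int 1)" by blast
  from even_two_times_div_two[OF this] show ?thesis
    unfolding genus_def unicellular vertices edges using False by simp
qed

lemma ncycles_Un_spanned:
  assumes "spanned H \<sigma> \<alpha> S"
  shows "ncycles \<alpha> H = ncycles \<alpha> S + ncycles \<alpha> (H - S)"
proof -
  have "finite H" "S \<subseteq> H" "\<alpha> ` S \<subseteq> S" "\<alpha> ` (H - S) \<subseteq> H - S"
    using assms spanned_dual[OF assms] is_mapD(1) unfolding spanned_def by auto
  then show ?thesis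
    using ncycles_Un[of S "H - S" \<alpha>] finite_subset by (metis Diff_disjoint Diff_partition finite_Diff)
qed

theorem mainTheorem7:
  fixes H S :: "'a set" and \<sigma> \<alpha> :: "'a \<Rightarrow> 'a" and r :: 'a
  assumes "r \<in> H"
    and "covered H \<sigma> \<alpha> S"
  shows "covered H (\<sigma> \<circ> \<alpha>) \<alpha> (H - S)
    \<and> genus H \<sigma> \<alpha> = genus S (restr \<sigma> S) (restr \<alpha> S)
        + genus (H - S) (restr (\<sigma> \<circ> \<alpha>) (H - S)) (restr \<alpha> (H - S))"
proof
  show dual: "covered H (\<sigma> \<circ> \<alpha>) \<alpha> (H - S)" by (rule covered_dual[OF assms(2)])
  have "2 * genus S (restr \<sigma> S) (restr \<alpha> S) = 1 - int (ncycles \<sigma> H) + int (ncycles \<alpha> S)"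
    by (rule two_genus_restr_covered[OF assms(2)])
  moreover have "2 * genus (H - S) (restr (\<sigma> \<circ> \<alpha>) (H - S)) (restr \<alpha> (H - S))
      = 1 - int (ncycles (\<sigma> \<circ> \<alpha>) H) + int (ncycles \<alpha> (H - S))"
    by (rule two_genus_restr_covered[OF dual])
  moreover have "ncycles \<alpha> H = ncycles \<alpha> S + ncycles \<alpha> (H - S)"
    using assms(2) ncycles_Un_spanned unfolding covered_def by blast
  moreover have "genus H \<sigma> \<alpha> = (2 - int (ncycles \<sigma> H) + int (ncycles \<alpha> H) - int (ncycles (\<sigma> \<circ> \<alpha>) H)) div 2"
    using assms(1) unfolding genus_def by auto
  ultimately show "genus H \<sigma> \<alpha> = genus S (restr \<sigma> S) (restr \<alpha> S)
      + genus (H - S) (restr (\<sigma> \<circ> \<alpha>) (H - S)) (restr \<alpha> (H - S))"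
    by presburger
qed

end
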